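(* Let $0<q<1$ and define monic polynomials by $p_{-1}=0$, $p_0=1$, $p_{n+1}(x)=(x-b_n)p_n(x)-\lambda_np_{n-1}(x)$ with $$b_n=q^{n+1}[n+1]_q+q^{n-1}[n]_q,\qquad \lambda_n=q^{2n-1}[n]_q^2.$$ Let $\mu$ be the discrete probability measure on $\mathbb R$ with mass $q^{i}(q;q)_\infty/(q;q)_{i-1}$ at the point $q^{i-1}/(1-q)$ for each $i\ge1$, and mass $1-q$ at $0$. Then the $p_n$ are orthogonal with respect to $\mu$ (i.e. $\int p_mp_n\,d\mu=0$ for $m\ne n$), and the moments of $\mu$ are $\mu_0=1$ and $\mu_n=\int x^n\,d\mu=q\,[n]_q!$ for $n\ge1$.
   Context: $[n]_q=\frac{1-q^n}{1-q}$, $[n]_q!=[n]_q\cdots[1]_q$, $(q;q)_k=\prod_{j=1}^{k}(1-q^j)$ (with $(q;q)_0=1$) and $(q;q)_\infty=\prod_{j\ge1}(1-q^j)$. *)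

theory Defs
  imports "HOL-Probability.Probability" "HOL-Computational_Algebra.Polynomial"
begin

definition qint :: "real \<Rightarrow> nat \<Rightarrow> real" where
  "qint q n = (1 - q ^ n) / (1 - q)"

definition qfact :: "real \<Rightarrow> nat \<Rightarrow> real" where
  "qfact q n = (\<Prod>k=1..n. qint q k)"

definition qpoch :: "real \<Rightarrow> nat \<Rightarrow> real" where
  "qpoch q k = (\<Prod>j=1..k. (1 - q ^ j))"

definition qpoch_inf :: "real \<Rightarrow> real" where
  "qpoch_inf q = (\<Prod>j. (1 - q ^ Suc j))"

definition bcoef :: "real \<Rightarrow> nat \<Rightarrow> real" where
  "bcoef q n = q ^ (n + 1) * qint q (n + 1) + q ^ (n - 1) * qint q n"

(* lambda_n = q^(2n-1) [n]_q^2; at n = 0 the factor [0]_q = 0 makes the value 0 *)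
definition lcoef :: "real \<Rightarrow> nat \<Rightarrow> real" where
  "lcoef q n = q ^ (2 * n - 1) * (qint q n)\<^sup>2"

fun opoly :: "real \<Rightarrow> nat \<Rightarrow> real poly" where
  "opoly q 0 = 1"
| "opoly q (Suc 0) = [:- bcoef q 0, 1:]"
| "opoly q (Suc (Suc n)) =
     [:- bcoef q (Suc n), 1:] * opoly q (Suc n) - smult (lcoef q (Suc n)) (opoly q n)"

definition mu_weight :: "real \<Rightarrow> real \<Rightarrow> real" where
  "mu_weight q x =
     (if x = 0 then 1 - q
      else if (\<exists>i\<ge>1. x = q ^ (i - 1) / (1 - q))
      then (let i = (THE i. i \<ge> 1 \<and> x = q ^ (i - 1) / (1 - q))
            in q ^ i * qpoch_inf q / qpoch q (i - 1))
      else 0)"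

definition mu :: "real \<Rightarrow> real measure" where
  "mu q = density (count_space UNIV) (\<lambda>x. ennreal (mu_weight q x))"

end

theory Submission
  imports Defs
begin

(* The moments come from Euler's identity sum_i z^i / (q;q)_i = 1 / (z;q)_oo at z = q^(k+1):
   the atom at q^i/(1-q) contributes q Q / (1-q)^k * (q^(k+1))^i / (q;q)_i with Q = (q;q)_oo,
   so the k-th moment is (1-q) 0^k + q (q;q)_k / (1-q)^k = (1-q) 0^k + q [k]_q!.
   For orthogonality, T(n,k) = int x^k p_n dmu satisfies the three-term recurrence
   T(n+2,k) = T(n+1,k+1) - b_(n+1) T(n+1,k) - lambda_(n+1) T(n,k) and has the closed form
     T(n,0) = [n = 0],
     T(n,j+1) = [j]_q! q^(n(n+1)/2) / (1-q)^n ([j+2]_q - q^n) prod_(i<n) (q^i - q^(j+1)),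
   which vanishes whenever j + 1 < n. As deg p_m <= m, int p_m p_n dmu = 0 for m < n. *)

lemma qpoch_Suc: "qpoch q (Suc k) = qpoch q k * (1 - q ^ Suc k)"
  unfolding qpoch_def by (simp add: prod.nat_ivl_Suc')

lemma qint_Suc: "q \<noteq> 1 \<Longrightarrow> qint q (Suc n) = 1 + q * qint q n"
  unfolding qint_def by (simp add: field_simps)

lemma qfact_Suc: "qfact q (Suc k) = qfact q k * qint q (Suc k)"
  unfolding qfact_def by (simp add: prod.nat_ivl_Suc')

lemma qfact_eq_qpoch: "q \<noteq> 1 \<Longrightarrow> qfact q k = qpoch q k / (1 - q) ^ k"
  by (induction k) (simp_all add: qfact_def qpoch_def qfact_Suc qpoch_Suc qint_def)

section \<open>Euler's identity and the moments of mu\<close>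

definition euler_qexp :: "real \<Rightarrow> real \<Rightarrow> real" where
  "euler_qexp q z = (\<Sum>i. z ^ i / qpoch q i)"

locale q_base =
  fixes q :: real
  assumes q_pos: "0 < q" and q_less_1: "q < 1"
begin

lemma qpoch_pos: "0 < qpoch q k"
  unfolding qpoch_def using q_pos q_less_1 by (intro prod_pos) (simp add: power_less_one_iff)

lemma convergent_prod_qpoch: "convergent_prod (\<lambda>j. 1 - q ^ Suc j)"
proof -
  have "summable (\<lambda>j. norm ((1 - q ^ Suc j) - 1))"
    using q_pos q_less_1 by (simp add: summable_geometric)
  then show ?thesis
    by (intro abs_convergent_prod_imp_convergent_prod summable_imp_abs_convergent_prod)
qed

lemma qpoch_LIMSEQ: "qpoch q \<longlonglongrightarrow> qpoch_inf q"
proof -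
  have partial_prod: "qpoch q (Suc n) = (\<Prod>j\<le>n. 1 - q ^ Suc j)" for n
    unfolding qpoch_def by (induction n) (simp_all add: prod.nat_ivl_Suc' atMost_Suc)
  have "(\<lambda>n. qpoch q (Suc n)) \<longlonglongrightarrow> qpoch_inf q"
    unfolding partial_prod qpoch_inf_def by (rule convergent_prod_LIMSEQ[OF convergent_prod_qpoch])
  then show ?thesis by (rule LIMSEQ_imp_Suc)
qed

lemma qpoch_inf_pos: "0 < qpoch_inf q"
proof -
  have "qpoch_inf q \<noteq> 0"
    unfolding qpoch_inf_def using convergent_prod_qpoch
    by (rule prodinf_nonzero) (metis power_Suc_less_one[OF q_pos q_less_1] less_irrefl eq_iff_diff_eq_0)
  moreover have "0 \<le> qpoch_inf q"
    using qpoch_LIMSEQ qpoch_pos by (intro LIMSEQ_le_const) (auto intro: less_imp_le)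
  ultimately show ?thesis by simp
qed

lemma qpoch_inf_le_qpoch: "qpoch_inf q \<le> qpoch q k"
proof (rule decseq_ge[OF _ qpoch_LIMSEQ])
  show "decseq (qpoch q)"
    using qpoch_pos q_pos q_less_1
    by (intro decseq_SucI) (simp add: qpoch_Suc mult_le_cancel_left1 less_imp_le)
qed

lemma summable_euler_qexp: "\<bar>z\<bar> < 1 \<Longrightarrow> summable (\<lambda>i. z ^ i / qpoch q i)"
proof (rule summable_comparison_test)
  assume "\<bar>z\<bar> < 1"
  then show "summable (\<lambda>i. \<bar>z\<bar> ^ i / qpoch_inf q)"
    by (intro summable_divide summable_geometric) simp
  have "norm (z ^ i / qpoch q i) \<le> \<bar>z\<bar> ^ i / qpoch_inf q" for i
  proof -
    have "norm (z ^ i / qpoch q i) = \<bar>z\<bar> ^ i / qpoch q i"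
      using qpoch_pos[of i] by (simp add: power_abs)
    also have "\<dots> \<le> \<bar>z\<bar> ^ i / qpoch_inf q"
      using qpoch_inf_pos qpoch_inf_le_qpoch qpoch_pos by (intro divide_left_mono) auto
    finally show ?thesis .
  qed
  then show "\<exists>N. \<forall>i\<ge>N. norm (z ^ i / qpoch q i) \<le> \<bar>z\<bar> ^ i / qpoch_inf q"
    by blast
qed

lemma euler_qexp_mult_q:
  assumes "\<bar>z\<bar> < 1"
  shows "euler_qexp q (q * z) = (1 - z) * euler_qexp q z"
proof -
  have "q * \<bar>z\<bar> \<le> \<bar>z\<bar>"
    using q_pos q_less_1 by (intro mult_left_le_one_le) auto
  then have "\<bar>q * z\<bar> < 1"
    using assms q_pos by (simp add: abs_mult)
  then have sums_qz: "(\<lambda>i. (q * z) ^ i / qpoch q i) sums euler_qexp q (q * z)"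
    unfolding euler_qexp_def by (intro summable_sums summable_euler_qexp)
  have sums_z: "(\<lambda>i. z ^ i / qpoch q i) sums euler_qexp q z"
    unfolding euler_qexp_def using assms by (intro summable_sums summable_euler_qexp)
  have "(\<lambda>i. z ^ i / qpoch q i - (q * z) ^ i / qpoch q i)
          sums (euler_qexp q z - euler_qexp q (q * z))"
    by (rule sums_diff[OF sums_z sums_qz])
  then have "(\<lambda>j. z ^ Suc j / qpoch q (Suc j) - (q * z) ^ Suc j / qpoch q (Suc j))
          sums (euler_qexp q z - euler_qexp q (q * z))"
    by (subst sums_Suc_iff) (simp add: qpoch_def)
  moreover have "z ^ Suc j / qpoch q (Suc j) - (q * z) ^ Suc j / qpoch q (Suc j)
      = z * (z ^ j / qpoch q j)" for j
  proof -
    have "1 - q ^ Suc j \<noteq> 0"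
      using power_Suc_less_one[OF q_pos q_less_1, of j] by linarith
    have "z ^ Suc j / qpoch q (Suc j) - (q * z) ^ Suc j / qpoch q (Suc j)
        = z ^ Suc j * (1 - q ^ Suc j) / (qpoch q j * (1 - q ^ Suc j))"
      by (simp only: qpoch_Suc power_mult_distrib diff_divide_distrib right_diff_distrib
          mult_1_right mult.commute)
    also have "\<dots> = z * (z ^ j / qpoch q j)"
      using \<open>1 - q ^ Suc j \<noteq> 0\<close> by simp
    finally show ?thesis .
  qed
  ultimately have "(\<lambda>j. z * (z ^ j / qpoch q j)) sums (euler_qexp q z - euler_qexp q (q * z))"
    by simp
  moreover have "(\<lambda>j. z * (z ^ j / qpoch q j)) sums (z * euler_qexp q z)"
    by (rule sums_mult[OF sums_z])
  ultimately have "euler_qexp q z - euler_qexp q (q * z) = z * euler_qexp q z"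
    by (rule sums_unique2)
  then show ?thesis
    by (simp add: algebra_simps)
qed

lemma euler_qexp_q_power: "euler_qexp q (q ^ Suc m) = qpoch q m * euler_qexp q q"
proof (induction m)
  case 0
  then show ?case by (simp add: qpoch_def)
next
  case (Suc m)
  have "euler_qexp q (q ^ Suc (Suc m)) = (1 - q ^ Suc m) * euler_qexp q (q ^ Suc m)"
    using euler_qexp_mult_q[of "q ^ Suc m"] power_Suc_less_one[OF q_pos q_less_1, of m] q_pos
    by simp
  then show ?case
    using Suc.IH by (simp add: qpoch_Suc)
qed

lemma euler_qexp_powser: "euler_qexp q z = (\<Sum>i. inverse (qpoch q i) * z ^ i)"
  unfolding euler_qexp_def by (simp add: field_simps)

lemma isCont_euler_qexp_0: "isCont (euler_qexp q) 0"
proof -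
  have "summable (\<lambda>i. inverse (qpoch q i) * q ^ i)"
    using summable_euler_qexp[of q] q_pos q_less_1 by (simp add: field_simps)
  from isCont_powser[OF this] show ?thesis
    using q_pos unfolding euler_qexp_powser[abs_def] by simp
qed

(* Iterating the functional equation determines these values up to the constant euler_qexp q q,
   which continuity at 0 pins down as m tends to infinity. *)
lemma euler_qexp_q_power_eq: "euler_qexp q (q ^ Suc m) = qpoch q m / qpoch_inf q"
proof -
  have "(\<lambda>m. q ^ Suc m) \<longlonglongrightarrow> 0"
    using q_pos q_less_1 by (intro LIMSEQ_Suc LIMSEQ_power_zero) simp
  then have "(\<lambda>m. euler_qexp q (q ^ Suc m)) \<longlonglongrightarrow> euler_qexp q 0"
    by (rule isCont_tendsto_compose[OF isCont_euler_qexp_0])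
  moreover have "euler_qexp q 0 = 1"
    unfolding euler_qexp_powser by (simp add: qpoch_def)
  moreover have "(\<lambda>m. euler_qexp q (q ^ Suc m)) \<longlonglongrightarrow> qpoch_inf q * euler_qexp q q"
    unfolding euler_qexp_q_power by (intro tendsto_mult tendsto_const qpoch_LIMSEQ)
  ultimately have "qpoch_inf q * euler_qexp q q = 1"
    using LIMSEQ_unique by metis
  then show ?thesis
    using qpoch_inf_pos unfolding euler_qexp_q_power by (simp add: field_simps)
qed

lemma mu_weight_atom: "mu_weight q (q ^ i / (1 - q)) = q ^ Suc i * qpoch_inf q / qpoch q i"
proof -
  have "(THE j. j \<ge> 1 \<and> q ^ i / (1 - q) = q ^ (j - 1) / (1 - q)) = Suc i"
  proof (rule the_equality)
    fix j assume "j \<ge> 1 \<and> q ^ i / (1 - q) = q ^ (j - 1) / (1 - q)"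
    then show "j = Suc i"
      using q_pos q_less_1 by (auto simp: Power.power_inject_exp')
  qed simp
  moreover have "\<exists>j\<ge>1. q ^ i / (1 - q) = q ^ (j - 1) / (1 - q)"
    by (intro exI[of _ "Suc i"]) simp
  ultimately show ?thesis
    using q_pos q_less_1 by (simp add: mu_weight_def Let_def)
qed

lemma mu_weight_eq_0:
  assumes "x \<notin> insert 0 (range (\<lambda>i. q ^ i / (1 - q)))"
  shows "mu_weight q x = 0"
proof -
  have "\<not> (\<exists>j\<ge>1. x = q ^ (j - 1) / (1 - q))"
    using assms by auto
  with assms show ?thesis
    unfolding mu_weight_def by auto
qed

lemma mu_weight_nonneg: "0 \<le> mu_weight q x"
proof -
  consider "x = 0" | i where "x = q ^ i / (1 - q)" | "x \<notin> insert 0 (range (\<lambda>i. q ^ i / (1 - q)))"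
    by blast
  then show ?thesis
    using q_pos q_less_1 qpoch_inf_pos qpoch_pos
    by cases (simp_all add: mu_weight_def[of q 0] mu_weight_atom mu_weight_eq_0 less_imp_le)
qed

lemma
  fixes g :: "real \<Rightarrow> real"
  assumes summable: "summable (\<lambda>i. \<bar>q ^ Suc i * qpoch_inf q / qpoch q i * g (q ^ i / (1 - q))\<bar>)"
  shows integrable_mu: "integrable (mu q) g"
    and integral_mu: "(\<integral>x. g x \<partial>mu q)
      = (1 - q) * g 0 + (\<Sum>i. q ^ Suc i * qpoch_inf q / qpoch q i * g (q ^ i / (1 - q)))"
proof -
  define h where "h x = mu_weight q x * g x" for x
  define atom where "atom i = q ^ i / (1 - q)" for i :: nat
  have h_atom: "h (atom i) = q ^ Suc i * qpoch_inf q / qpoch q i * g (atom i)" for i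
    by (simp add: h_def atom_def mu_weight_atom)
  have h_outside: "h x = 0" if "x \<notin> insert 0 (range atom)" for x
    using that by (simp add: h_def atom_def mu_weight_eq_0)
  have inj_atom: "inj atom"
    using q_pos q_less_1 by (intro injI) (simp add: atom_def Power.power_inject_exp')
  have "0 \<notin> range atom"
    using q_pos q_less_1 by (auto simp: atom_def)
  have "Infinite_Set_Sum.abs_summable_on (\<lambda>i. h (atom i)) UNIV"
    unfolding abs_summable_on_nat_iff' real_norm_def h_atom using summable by (simp add: atom_def)
  then have abs_summable_atoms: "Infinite_Set_Sum.abs_summable_on h (range atom)"
    using abs_summable_on_reindex_iff[OF inj_atom, of h] by blast
  then have abs_summable: "Infinite_Set_Sum.abs_summable_on h (insert 0 (range atom))"
    by simp
  have nonneg: "AE x in count_space UNIV. 0 \<le> mu_weight q x"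
    using mu_weight_nonneg by simp
  have "Infinite_Set_Sum.abs_summable_on h UNIV"
    using abs_summable abs_summable_on_cong_neutral[of UNIV "insert 0 (range atom)" h h]
    by (auto simp: h_outside)
  then show "integrable (mu q) g"
    unfolding mu_def using nonneg by (simp add: integrable_density abs_summable_on_def h_def)
  have "(\<integral>x. g x \<partial>mu q) = infsetsum h UNIV"
    unfolding mu_def using nonneg by (simp add: integral_density infsetsum_def h_def)
  also have "\<dots> = infsetsum h (insert 0 (range atom))"
    by (rule infsetsum_cong_neutral) (auto simp: h_outside)
  also have "\<dots> = infsetsum h {0} + infsetsum h (range atom)"
    using \<open>0 \<notin> range atom\<close> abs_summable_atoms
    by (subst insert_is_Un) (rule infsetsum_Un_disjoint, auto)
  also have "infsetsum h (range atom) = (\<Sum>i. h (atom i))"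
    using abs_summable_atoms inj_atom
    by (simp add: infsetsum_reindex infsetsum_nat'
        abs_summable_on_reindex_iff[OF inj_atom, of h, symmetric])
  finally show "(\<integral>x. g x \<partial>mu q)
      = (1 - q) * g 0 + (\<Sum>i. q ^ Suc i * qpoch_inf q / qpoch q i * g (q ^ i / (1 - q)))"
    by (simp only: h_atom) (simp add: h_def mu_weight_def[of q 0] atom_def)
qed

lemma
  shows integrable_power_mu: "integrable (mu q) (\<lambda>x. x ^ k)"
    and integral_power_mu: "(\<integral>x. x ^ k \<partial>mu q) = (1 - q) * 0 ^ k + q * qfact q k"
proof -
  define c where "c = q * qpoch_inf q / (1 - q) ^ k"
  have term_eq: "q ^ Suc i * qpoch_inf q / qpoch q i * (q ^ i / (1 - q)) ^ k
      = c * ((q ^ Suc k) ^ i / qpoch q i)" for i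
    by (simp add: c_def power_divide power_mult_distrib power_add flip: power_mult)
      (simp add: field_simps mult.commute[of k])
  have "\<bar>q ^ Suc k\<bar> < 1"
    using power_Suc_less_one[OF q_pos q_less_1, of k] q_pos by simp
  then have summable: "summable (\<lambda>i. c * ((q ^ Suc k) ^ i / qpoch q i))"
    by (intro summable_mult summable_euler_qexp)
  have nonneg: "0 \<le> c * ((q ^ Suc k) ^ i / qpoch q i)" for i
    using q_pos q_less_1 qpoch_inf_pos qpoch_pos[of i] by (simp add: c_def)
  have abs_summable: "summable (\<lambda>i. \<bar>q ^ Suc i * qpoch_inf q / qpoch q i * (q ^ i / (1 - q)) ^ k\<bar>)"
    unfolding term_eq abs_of_nonneg[OF nonneg] by (rule summable)
  then show "integrable (mu q) (\<lambda>x. x ^ k)"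
    by (rule integrable_mu)
  have "(\<Sum>i. c * ((q ^ Suc k) ^ i / qpoch q i)) = c * euler_qexp q (q ^ Suc k)"
    unfolding euler_qexp_def using summable_euler_qexp[OF \<open>\<bar>q ^ Suc k\<bar> < 1\<close>]
    by (rule suminf_mult)
  also have "\<dots> = q * qfact q k"
    using q_less_1 qpoch_inf_pos unfolding euler_qexp_q_power_eq
    by (simp add: qfact_eq_qpoch c_def)
  finally show "(\<integral>x. x ^ k \<partial>mu q) = (1 - q) * 0 ^ k + q * qfact q k"
    using integral_mu[OF abs_summable] unfolding term_eq by simp
qed

lemma prob_space_mu: "prob_space (mu q)"
proof
  have "emeasure (mu q) (space (mu q)) = (\<integral>\<^sup>+ x. x ^ 0 \<partial>mu q)"
    by simp
  also have "\<dots> = ennreal (\<integral>x. x ^ 0 \<partial>mu q)"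
    using integrable_power_mu[of 0] by (intro nn_integral_eq_integral) auto
  also have "(\<integral>x. x ^ 0 \<partial>mu q) = 1"
    using integral_power_mu[of 0] by (simp add: qfact_def)
  finally show "emeasure (mu q) (space (mu q)) = 1"
    by simp
qed

end

section \<open>Orthogonality\<close>

lemma degree_opoly_le: "degree (opoly q n) \<le> n"
proof (induction q n rule: opoly.induct)
  case (3 q n)
  have "degree ([:- bcoef q (Suc n), 1:] * opoly q (Suc n)) \<le> Suc (Suc n)"
    using degree_mult_le[of "[:- bcoef q (Suc n), 1:]" "opoly q (Suc n)"] 3 by simp
  moreover have "degree (smult (lcoef q (Suc n)) (opoly q n)) \<le> Suc (Suc n)"
    using 3 by simp
  ultimately show ?case
    by (simp add: degree_diff_le)
qed simp_all

definition opoly_moment :: "real \<Rightarrow> nat \<Rightarrow> nat \<Rightarrow> real" where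
  "opoly_moment q n j = qfact q j * (\<Prod>i=1..n. q ^ i / (1 - q)) * (qint q (j + 2) - q ^ n)
     * (\<Prod>i<n. q ^ i - q ^ Suc j)"

lemma opoly_moment_eq_0:
  assumes "Suc j < n"
  shows "opoly_moment q n j = 0"
proof -
  have "(\<Prod>i<n. q ^ i - q ^ Suc j) = 0"
    using assms by (intro prod_zero bexI[of _ "Suc j"]) auto
  then show ?thesis
    by (simp add: opoly_moment_def)
qed

(* The recurrence of opoly_moment in the variables a = q^n, c = q^(j+1), u = 1/(1-q),
   with z the common factor of all four terms. *)
lemma opoly_moment_recurrence_identity:
  fixes q a c u z :: "'a :: field"
  assumes "u * (1 - q) = 1"
  shows "z * ((a*q*u) * (a*q^2*u) * ((1 - q*c)*u - a*q^2) * ((a - c) * (a*q - c)))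
    = z * (((1 - c)*u) * (a*q*u) * ((1 - q^2*c)*u - a*q) * ((1 - q*c) * a))
      - (a*q^2*((1 - a*q^2)*u) + a*((1 - a*q)*u)) * (z * ((a*q*u) * ((1 - q*c)*u - a*q) * (a - c)))
      - a^2*q*((1 - a*q)*u)^2 * (z * ((1 - q*c)*u - a))"
  using assms by algebra

lemma opoly_moment_recurrence:
  assumes "q \<noteq> 1"
  shows "opoly_moment q (Suc (Suc n)) j = opoly_moment q (Suc n) (Suc j)
    - bcoef q (Suc n) * opoly_moment q (Suc n) j - lcoef q (Suc n) * opoly_moment q n j"
proof -
  define a c u where "a = q ^ n" and "c = q ^ Suc j" and "u = inverse (1 - q)"
  define D P where "D = (\<Prod>i=1..n. q ^ i / (1 - q))" and "P = (\<Prod>i<n. q ^ i - c)"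
  define z where "z = qfact q j * D * P"
  have u: "u * (1 - q) = 1"
    using assms by (simp add: u_def)
  have pow: "q ^ n = a" "q ^ Suc n = a * q" "q ^ Suc (Suc n) = a * q^2"
    "q ^ Suc j = c" "q ^ Suc (Suc j) = q * c"
    by (simp_all add: a_def c_def power2_eq_square)
  have qint: "qint q (Suc j) = (1 - c) * u" "qint q (j + 2) = (1 - q*c) * u"
    "qint q (Suc j + 2) = (1 - q^2*c) * u"
    by (simp_all add: qint_def c_def u_def divide_inverse power2_eq_square)
  have D: "(\<Prod>i=1..Suc n. q ^ i / (1 - q)) = D * (a*q*u)"
    "(\<Prod>i=1..Suc (Suc n). q ^ i / (1 - q)) = D * (a*q*u) * (a*q^2*u)"
    by (simp_all add: D_def a_def u_def prod.nat_ivl_Suc' divide_inverse mult_ac power2_eq_square)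
  have P: "(\<Prod>i<Suc n. q ^ i - c) = P * (a - c)"
    "(\<Prod>i<Suc (Suc n). q ^ i - c) = P * ((a - c) * (a*q - c))"
    by (simp_all add: P_def a_def mult_ac)
  have "(\<Prod>i<Suc n. q ^ i - q * c) = (1 - q*c) * (\<Prod>i<n. q * (q ^ i - c))"
    by (subst prod.lessThan_Suc_shift) (simp add: right_diff_distrib)
  then have P_shift: "(\<Prod>i<Suc n. q ^ i - q * c) = P * ((1 - q*c) * a)"
    by (simp add: prod.distrib P_def a_def mult_ac)
  have b: "bcoef q (Suc n) = a*q^2*((1 - a*q^2)*u) + a*((1 - a*q)*u)"
    by (simp add: bcoef_def qint_def a_def u_def divide_inverse mult_ac power2_eq_square)
  have l: "lcoef q (Suc n) = a^2*q*((1 - a*q)*u)^2"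
  proof -
    have "2 * Suc n - 1 = Suc (2 * n)" by simp
    then show ?thesis
      by (simp add: lcoef_def qint_def a_def u_def divide_inverse power_mult power_mult_distrib mult_ac)
  qed
  have "opoly_moment q n j = z * ((1 - q*c)*u - a)"
    "opoly_moment q (Suc n) j = z * ((a*q*u) * ((1 - q*c)*u - a*q) * (a - c))"
    "opoly_moment q (Suc n) (Suc j)
       = z * (((1 - c)*u) * (a*q*u) * ((1 - q^2*c)*u - a*q) * ((1 - q*c) * a))"
    "opoly_moment q (Suc (Suc n)) j
       = z * ((a*q*u) * (a*q^2*u) * ((1 - q*c)*u - a*q^2) * ((a - c) * (a*q - c)))"
    unfolding opoly_moment_def qfact_Suc pow qint D P P_shift
    by (simp_all add: z_def D_def P_def mult_ac)
  then show ?thesis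
    unfolding b l by (simp only: opoly_moment_recurrence_identity[OF u])
qed

context q_base
begin

lemma integrable_poly_mu: "integrable (mu q) (\<lambda>x. poly p x)"
  unfolding poly_altdef
  by (intro Bochner_Integration.integrable_sum integrable_mult_right integrable_power_mu)

lemma integrable_power_mult_poly_mu: "integrable (mu q) (\<lambda>x. x ^ k * poly p x)"
  using integrable_poly_mu[of "monom 1 k * p"] by (simp add: poly_monom)

lemma integral_power_mult_opoly_recurrence:
  "(\<integral>x. x ^ k * poly (opoly q (Suc (Suc n))) x \<partial>mu q)
     = (\<integral>x. x ^ Suc k * poly (opoly q (Suc n)) x \<partial>mu q)
       - bcoef q (Suc n) * (\<integral>x. x ^ k * poly (opoly q (Suc n)) x \<partial>mu q)
       - lcoef q (Suc n) * (\<integral>x. x ^ k * poly (opoly q n) x \<partial>mu q)"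
proof -
  have "(\<integral>x. x ^ k * poly (opoly q (Suc (Suc n))) x \<partial>mu q)
     = (\<integral>x. (x ^ Suc k * poly (opoly q (Suc n)) x
         - bcoef q (Suc n) * (x ^ k * poly (opoly q (Suc n)) x))
         - lcoef q (Suc n) * (x ^ k * poly (opoly q n) x) \<partial>mu q)"
    by (simp add: algebra_simps)
  also have "\<dots> = (\<integral>x. x ^ Suc k * poly (opoly q (Suc n)) x
         - bcoef q (Suc n) * (x ^ k * poly (opoly q (Suc n)) x) \<partial>mu q)
       - (\<integral>x. lcoef q (Suc n) * (x ^ k * poly (opoly q n) x) \<partial>mu q)"
    by (intro Bochner_Integration.integral_diff Bochner_Integration.integrable_diff
        integrable_mult_right integrable_power_mult_poly_mu)
  also have "(\<integral>x. x ^ Suc k * poly (opoly q (Suc n)) x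
         - bcoef q (Suc n) * (x ^ k * poly (opoly q (Suc n)) x) \<partial>mu q)
       = (\<integral>x. x ^ Suc k * poly (opoly q (Suc n)) x \<partial>mu q)
         - (\<integral>x. bcoef q (Suc n) * (x ^ k * poly (opoly q (Suc n)) x) \<partial>mu q)"
    by (intro Bochner_Integration.integral_diff integrable_mult_right integrable_power_mult_poly_mu)
  finally show ?thesis
    by simp
qed

lemma integral_power_mult_opoly_1:
  "(\<integral>x. x ^ k * poly (opoly q 1) x \<partial>mu q) = (if k = 0 then 0 else opoly_moment q 1 (k - 1))"
proof -
  have "bcoef q 0 = q"
    using q_less_1 by (simp add: bcoef_def qint_def)
  then have "(\<integral>x. x ^ k * poly (opoly q 1) x \<partial>mu q) = (\<integral>x. x ^ Suc k - q * x ^ k \<partial>mu q)"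
    by (simp add: algebra_simps)
  also have "\<dots> = (\<integral>x. x ^ Suc k \<partial>mu q) - q * (\<integral>x. x ^ k \<partial>mu q)"
    by (simp del: power_Suc add: integrable_power_mu)
  finally have integral_eq: "(\<integral>x. x ^ k * poly (opoly q 1) x \<partial>mu q)
      = (\<integral>x. x ^ Suc k \<partial>mu q) - q * (\<integral>x. x ^ k \<partial>mu q)" .
  show ?thesis
  proof (cases k)
    case 0
    then show ?thesis
      using integral_eq integral_power_mu[of 0] integral_power_mu[of 1] q_less_1
      by (simp add: qfact_def qint_def)
  next
    case (Suc j)
    have "opoly_moment q 1 j = q * qfact q (Suc j) * (qint q (j + 2) - q)"
      using q_less_1 by (simp add: opoly_moment_def qfact_Suc qint_def)
    then show ?thesis
      using integral_eq Suc
      by (simp del: power_Suc add: integral_power_mu qfact_Suc[of q "Suc j"] algebra_simps)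
  qed
qed

lemma integral_power_mult_opoly:
  "(\<integral>x. x ^ k * poly (opoly q n) x \<partial>mu q)
     = (if k = 0 then of_bool (n = 0) else opoly_moment q n (k - 1))"
proof (induction n arbitrary: k rule: induct_nat_012)
  case 0
  show ?case
  proof (cases k)
    case (Suc j)
    have "qint q (j + 2) - 1 = q * qint q (Suc j)"
      using q_less_1 by (simp add: qint_Suc)
    then show ?thesis
      using Suc by (simp del: power_Suc add: integral_power_mu opoly_moment_def qfact_Suc)
  qed (use integral_power_mu[of 0] in \<open>simp add: qfact_def\<close>)
next
  case 1
  show ?case
    using integral_power_mult_opoly_1 by simp
next
  case (ge2 n)
  have rec: "(\<integral>x. x ^ k * poly (opoly q (Suc (Suc n))) x \<partial>mu q)
      = opoly_moment q (Suc n) k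
        - bcoef q (Suc n) * (if k = 0 then 0 else opoly_moment q (Suc n) (k - 1))
        - lcoef q (Suc n) * (if k = 0 then of_bool (n = 0) else opoly_moment q n (k - 1))"
    unfolding integral_power_mult_opoly_recurrence ge2 by simp
  show ?case
  proof (cases k)
    case 0
    have "lcoef q 1 = q"
      using q_less_1 by (simp add: lcoef_def qint_def)
    moreover have "opoly_moment q 1 0 = q"
      using q_less_1 by (simp add: opoly_moment_def qfact_def qint_def field_simps power2_eq_square)
    ultimately show ?thesis
      using rec 0 by (cases n) (simp_all add: opoly_moment_eq_0)
  next
    case (Suc j)
    then show ?thesis
      using rec q_less_1 by (simp add: opoly_moment_recurrence)
  qed
qed

lemma integral_power_mult_opoly_eq_0:
  assumes "k < n"
  shows "(\<integral>x. x ^ k * poly (opoly q n) x \<partial>mu q) = 0"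
  using assms by (simp add: integral_power_mult_opoly opoly_moment_eq_0)

lemma integral_opoly_mult_opoly_eq_0:
  assumes "m < n"
  shows "(\<integral>x. poly (opoly q m) x * poly (opoly q n) x \<partial>mu q) = 0"
proof -
  let ?p = "opoly q m"
  have "(\<integral>x. poly ?p x * poly (opoly q n) x \<partial>mu q)
      = (\<integral>x. (\<Sum>i\<le>degree ?p. coeff ?p i * (x ^ i * poly (opoly q n) x)) \<partial>mu q)"
    by (simp add: poly_altdef sum_distrib_right mult_ac)
  also have "\<dots> = (\<Sum>i\<le>degree ?p. coeff ?p i * (\<integral>x. x ^ i * poly (opoly q n) x \<partial>mu q))"
    by (simp add: integrable_power_mult_poly_mu)
  also have "\<dots> = 0"
    using degree_opoly_le[of q m] assms
    by (intro sum.neutral ballI) (simp add: integral_power_mult_opoly_eq_0)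
  finally show ?thesis .
qed

end

theorem proposition1:
  fixes q :: real
  assumes "0 < q" and "q < 1"
  shows "prob_space (mu q)
    \<and> (\<forall>m n. integrable (mu q) (\<lambda>x. poly (opoly q m) x * poly (opoly q n) x))
    \<and> (\<forall>m n. m \<noteq> n \<longrightarrow>
           (\<integral>x. poly (opoly q m) x * poly (opoly q n) x \<partial>mu q) = 0)
    \<and> (\<forall>n. integrable (mu q) (\<lambda>x. x ^ n))
    \<and> (\<integral>x. x ^ 0 \<partial>mu q) = 1
    \<and> (\<forall>n\<ge>1. (\<integral>x. x ^ n \<partial>mu q) = q * qfact q n)"
proof -
  interpret q_base q
    using assms by unfold_locales
  show ?thesis
  proof (intro conjI allI impI)
    show "prob_space (mu q)"
      by (rule prob_space_mu)
  next
    fix m n :: nat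
    show "integrable (mu q) (\<lambda>x. poly (opoly q m) x * poly (opoly q n) x)"
      using integrable_poly_mu[of "opoly q m * opoly q n"] by simp
  next
    fix m n :: nat
    assume "m \<noteq> n"
    then show "(\<integral>x. poly (opoly q m) x * poly (opoly q n) x \<partial>mu q) = 0"
      using integral_opoly_mult_opoly_eq_0[of m n] integral_opoly_mult_opoly_eq_0[of n m]
      by (cases "m < n") (simp_all add: mult.commute)
  next
    fix n
    show "integrable (mu q) (\<lambda>x. x ^ n)"
      by (rule integrable_power_mu)
  next
    show "(\<integral>x. x ^ 0 \<partial>mu q) = 1"
      using integral_power_mu[of 0] by (simp add: qfact_def)
  next
    fix n :: nat
    assume "n \<ge> 1"
    then show "(\<integral>x. x ^ n \<partial>mu q) = q * qfact q n"
      by (simp add: integral_power_mu)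
  qed
qed

end
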